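(* Assume $|C|<m$ and $A\not\subseteq B$, and let $\mathcal S_1=\{(w_1+uw_2,w_3)\in\mathcal R^m: w_1\in\Delta_A,\ w_2\in\Delta_B,\ w_3\in\Delta_C^c\}$. Then $\Phi(\mathscr C_{\mathcal S_1})$ is a $4$-weight linear code over $\mathbb F_q$ with parameters $\big[2q^{|A|+|B|}(q^m-q^{|C|}),\ m+|A|+|A\cup B|,\ (q-1)q^{|A|+|B|-1}(q^m-q^{|C|})\big]$ whose nonzero Hamming weights and frequencies are: $(q-1)q^{|A|+|B|-1}(q^m-q^{|C|})$ with frequency $2(q^{|A\cup B|-|B|}-1)$; $2(q-1)q^{|A|+|B|-1}(q^m-q^{|C|})$ with frequency $q^{m+|A|+|A\cup B|}-2q^{m-|C|+|A\cup B|-|B|}+q^{m-|C|}$; $(q-1)q^{|A|+|B|-1}(2q^m-q^{|C|})$ with frequency $2(q^{|A\cup B|-|B|}-1)(q^{m-|C|}-1)$; $2(q-1)q^{m+|A|+|B|-1}$ with frequency $q^{m-|C|}-1$. Moreover, if $q=2$ or $q=3$, then $\Phi(\mathscr C_{\mathcal S_1})$ is self-orthogonal with respect to the Euclidean inner product on $\mathbb F_q^{n}$.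
   Context: Let $q$ be a prime power, $\mathbb F_q$ the field of order $q$, $m\ge 2$ an integer and $[m]=\{1,\dots,m\}$. For $v\in\mathbb F_q^m$, $\mathrm{supp}(v)=\{i:v_i\ne0\}$ and $wt_H$ is Hamming weight. For nonempty $P\subseteq[m]$, $\Delta_P=\{v\in\mathbb F_q^m:\mathrm{supp}(v)\subseteq P\}$, $\Delta_P^c=\mathbb F_q^m\setminus\Delta_P$. $A,B,C$ denote nonempty subsets of $[m]$. Let $R=\mathbb F_q[u]/\langle u^2\rangle$ and $\mathcal R=R\times\mathbb F_q$; each element of $\mathcal R^m$ is uniquely $(d+ue,f)$ with $d,e,f\in\mathbb F_q^m$. Define $\langle(d_1+ue_1,f_1),(d_2+ue_2,f_2)\rangle=(d_1+ue_1)\cdot(d_2+ue_2)+u\,f_1\cdot f_2\in R$, where $x\cdot y=\sum_i x_iy_i$. For a nonempty $\mathcal D\subseteq\mathcal R^m$ listed in a fixed order, $\mathscr C_{\mathcal D}=\{(\langle r,s\rangle)_{s\in\mathcal D}: r\in\mathcal R^m\}\subseteq R^{|\mathcal D|}$. The Gray map $\Phi:R^n\to\mathbb F_q^{2n}$ is $\Phi(d+ue)=(e,d+e)$ for $d,e\in\mathbb F_q^n$, applied to a code elementwise. An $[n,k,d]$ code is a linear code of length $n$, dimension $k$, minimum Hamming distance $d$; a code $\mathcal C$ is self-orthogonal if $\mathcal C\subseteq\mathcal C^\perp$. *)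

theory Defs
  imports Complex_Main "HOL-Library.Function_Algebras"
begin

(* Vectors in F_q^m are functions 'n \<Rightarrow> 'a, where 'n is a finite index type with
   CARD('n) = m (so [m] corresponds to UNIV :: 'n set) and 'a is a finite field, q = CARD('a). *)

definition supp :: "('n \<Rightarrow> 'a::zero) \<Rightarrow> 'n set" where
  "supp v = {i. v i \<noteq> 0}"

definition Delta :: "'n set \<Rightarrow> ('n \<Rightarrow> 'a::zero) set" where
  "Delta P = {v. supp v \<subseteq> P}"

definition DeltaC :: "'n set \<Rightarrow> ('n \<Rightarrow> 'a::zero) set" where
  "DeltaC P = UNIV - Delta P"

definition dotp :: "('n::finite \<Rightarrow> 'a::comm_ring) \<Rightarrow> ('n \<Rightarrow> 'a) \<Rightarrow> 'a" where
  "dotp x y = (\<Sum>i\<in>UNIV. x i * y i)"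

(* An element d + u e of R = F_q[u]/<u^2> is represented as the pair (d, e).
   An element (d + u e, f) of \<R>^m = (R \<times> F_q)^m is represented as the triple (d, e, f)
   of vectors in F_q^m. *)

type_synonym ('n, 'a) Rvec = "('n \<Rightarrow> 'a) \<times> ('n \<Rightarrow> 'a) \<times> ('n \<Rightarrow> 'a)"

(* <(d1+ue1,f1),(d2+ue2,f2)> = (d1+ue1).(d2+ue2) + u f1.f2
                             = d1.d2 + u (d1.e2 + e1.d2 + f1.f2) *)
definition rinner :: "('n::finite, 'a::comm_ring) Rvec \<Rightarrow> ('n, 'a) Rvec \<Rightarrow> 'a \<times> 'a" where
  "rinner r s = (case r of (d1, e1, f1) \<Rightarrow> case s of (d2, e2, f2) \<Rightarrow>
      (dotp d1 d2, dotp d1 e2 + dotp e1 d2 + dotp f1 f2))"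

definition codeR :: "('n::finite, 'a::comm_ring) Rvec set \<Rightarrow> (('n, 'a) Rvec \<Rightarrow> 'a \<times> 'a) set" where
  "codeR D = {(\<lambda>s. if s \<in> D then rinner r s else (0, 0)) | r. True}"

(* Gray map \<Phi>(d + u e) = (e, d + e): coordinate (s, False) carries e_s and (s, True) carries
   d_s + e_s; the resulting vector has index set D \<times> UNIV, of size 2|D|. *)
definition gray :: "'s set \<Rightarrow> ('s \<Rightarrow> 'a::comm_ring \<times> 'a) \<Rightarrow> ('s \<times> bool \<Rightarrow> 'a)" where
  "gray D c = (\<lambda>(s, b). if s \<in> D then (if b then fst (c s) + snd (c s) else snd (c s)) else 0)"

definition Phi :: "'s set \<Rightarrow> ('s \<Rightarrow> 'a::comm_ring \<times> 'a) set \<Rightarrow> ('s \<times> bool \<Rightarrow> 'a) set" where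
  "Phi D C = gray D ` C"

definition ambient :: "'i set \<Rightarrow> ('i \<Rightarrow> 'a::zero) set" where
  "ambient I = {v. \<forall>i. i \<notin> I \<longrightarrow> v i = 0}"

definition fscale :: "'a::field \<Rightarrow> ('i \<Rightarrow> 'a) \<Rightarrow> ('i \<Rightarrow> 'a)" where
  "fscale c v = (\<lambda>i. c * v i)"

definition is_linear_code :: "'i set \<Rightarrow> ('i \<Rightarrow> 'a::field) set \<Rightarrow> bool" where
  "is_linear_code I C \<longleftrightarrow> finite I \<and> C \<subseteq> ambient I \<and> module.subspace fscale C"

definition code_length :: "'i set \<Rightarrow> ('i \<Rightarrow> 'a) set \<Rightarrow> nat" where
  "code_length I C = card I"

definition code_dim :: "('i \<Rightarrow> 'a::field) set \<Rightarrow> nat" where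
  "code_dim C = vector_space.dim fscale C"

definition wtH :: "('i \<Rightarrow> 'a::zero) \<Rightarrow> nat" where
  "wtH v = card {i. v i \<noteq> 0}"

definition distH :: "('i \<Rightarrow> 'a) \<Rightarrow> ('i \<Rightarrow> 'a) \<Rightarrow> nat" where
  "distH x y = card {i. x i \<noteq> y i}"

definition min_dist :: "('i \<Rightarrow> 'a) set \<Rightarrow> nat" where
  "min_dist C = Min {distH x y | x y. x \<in> C \<and> y \<in> C \<and> x \<noteq> y}"

definition weights :: "('i \<Rightarrow> 'a::zero) set \<Rightarrow> nat set" where
  "weights C = {wtH c | c. c \<in> C \<and> c \<noteq> 0}"

definition freq :: "('i \<Rightarrow> 'a::zero) set \<Rightarrow> nat \<Rightarrow> nat" where
  "freq C w = card {c \<in> C. c \<noteq> 0 \<and> wtH c = w}"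

definition dual_code :: "'i set \<Rightarrow> ('i \<Rightarrow> 'a::comm_ring) set \<Rightarrow> ('i \<Rightarrow> 'a) set" where
  "dual_code I C = {y \<in> ambient I. \<forall>x\<in>C. (\<Sum>i\<in>I. x i * y i) = 0}"

definition self_orthogonal :: "'i set \<Rightarrow> ('i \<Rightarrow> 'a::comm_ring) set \<Rightarrow> bool" where
  "self_orthogonal I C \<longleftrightarrow> C \<subseteq> dual_code I C"

definition S1 :: "'n set \<Rightarrow> 'n set \<Rightarrow> 'n set \<Rightarrow> ('n::finite, 'a::comm_ring) Rvec set" where
  "S1 A B C = {(w1, w2, w3). w1 \<in> Delta A \<and> w2 \<in> Delta B \<and> w3 \<in> DeltaC C}"

end

theory Submission
  imports Defs "HOL-Library.FuncSet" "HOL-Library.Cardinality" "HOL-Library.Product_Plus"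
begin

(* Write r = (\<alpha> + u\<beta>, \<gamma>) and s = (w1 + u w2, w3). The two Gray coordinates of the codeword of r
   at s are the linear forms \<beta>\<cdot>w1 + \<alpha>\<cdot>w2 + \<gamma>\<cdot>w3 and (\<alpha> + \<beta>)\<cdot>w1 + \<alpha>\<cdot>w2 + \<gamma>\<cdot>w3 in s. A linear
   form not vanishing on a coordinate subspace takes every value equally often there. As S1 is the
   difference of \<Delta>_A \<times> \<Delta>_B \<times> F_q^m and \<Delta>_A \<times> \<Delta>_B \<times> \<Delta>_C, such a form is therefore nonzero at
   wt1 = (q-1)q^(a+b-1)(q^m-q^c) points of S1 if it does not vanish on \<Delta>_A \<times> \<Delta>_B \<times> \<Delta>_C, at
   wt2 = (q-1)q^(m+a+b-1) points if it does but \<gamma> \<noteq> 0, and nowhere otherwise; so every weight is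
   one of wt1, 2 wt1, wt1 + wt2, 2 wt2. The codeword vanishes iff \<alpha> = 0 on A \<union> B, \<beta> = 0 on A and
   \<gamma> = 0, so \<alpha> \<in> \<Delta>_(A\<union>B), \<beta> \<in> \<Delta>_A, \<gamma> \<in> F_q^m parametrise the code bijectively. Sorting these
   parameters by which of the two forms vanish gives the frequencies of wt1, wt1 + wt2 and 2 wt2;
   that of 2 wt1 is what is left. For self-orthogonality, the inner product of two codewords is a
   sum over S1 of products of two linear forms, which vanishes because a quadratic polynomial sums
   to zero over every three-dimensional coordinate cube. *)


section \<open>Finite fields and linear codes\<close>

lemma of_nat_CARD_eq_0: "of_nat CARD('a::{finite,ring_1}) = (0::'a)"
proof -
  have "(\<Sum>x\<in>UNIV. x + 1) = (\<Sum>x\<in>(UNIV::'a set). x)"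
    by (rule sum.reindex_bij_betw) (rule bij_betwI[of _ _ _ "\<lambda>x. x - 1"], auto)
  then show ?thesis by (simp add: sum.distrib)
qed

lemma CARD_field_ge_2: "CARD('a::{finite,field}) \<ge> 2"
proof -
  have "card {0::'a, 1} \<le> CARD('a)" by (rule card_mono) auto
  then show ?thesis by simp
qed

lemma vector_space_fscale: "vector_space (fscale :: 'a::field \<Rightarrow> ('i \<Rightarrow> 'a) \<Rightarrow> _)"
  by unfold_locales (auto simp: fscale_def algebra_simps)

lemma card_subspace_fscale:
  fixes S :: "('i \<Rightarrow> 'a::{finite,field}) set"
  assumes sub: "module.subspace fscale S" and fin: "finite S"
  shows "card S = CARD('a) ^ vector_space.dim fscale S"
proof -
  interpret vs: vector_space "fscale :: 'a \<Rightarrow> ('i \<Rightarrow> 'a) \<Rightarrow> _" by (rule vector_space_fscale)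
  obtain B where B: "B \<subseteq> S" "vs.independent B" "S \<subseteq> vs.span B" "card B = vs.dim S"
    using vs.basis_exists by blast
  have finB: "finite B" using B(1) fin finite_subset by blast
  let ?comb = "\<lambda>u. \<Sum>v\<in>B. fscale (u v) v"
  have "S = range ?comb"
    using vs.span_subspace[OF B(1,3) sub] vs.span_finite[OF finB] by simp
  also have "\<dots> = ?comb ` (B \<rightarrow>\<^sub>E UNIV)"
  proof (rule antisym)
    show "range ?comb \<subseteq> ?comb ` (B \<rightarrow>\<^sub>E UNIV)"
    proof
      fix x assume "x \<in> range ?comb"
      then obtain u where "x = ?comb u" by blast
      also have "\<dots> = ?comb (restrict u B)" by (rule sum.cong) auto
      finally show "x \<in> ?comb ` (B \<rightarrow>\<^sub>E UNIV)" by (rule image_eqI[where x = "restrict u B"]) auto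
    qed
  qed auto
  finally have S_eq: "S = ?comb ` (B \<rightarrow>\<^sub>E UNIV)" .
  have "inj_on ?comb (B \<rightarrow>\<^sub>E UNIV)"
  proof (rule inj_onI)
    fix u w assume u: "u \<in> B \<rightarrow>\<^sub>E UNIV" and w: "w \<in> B \<rightarrow>\<^sub>E UNIV" and eq: "?comb u = ?comb w"
    have indep: "\<forall>c. (\<Sum>v\<in>B. fscale (c v) v) = 0 \<longrightarrow> (\<forall>v\<in>B. c v = 0)"
      using B(2) unfolding vs.dependent_finite[OF finB] by blast
    have "(\<Sum>v\<in>B. fscale (u v - w v) v) = 0"
      using eq by (simp add: vs.scale_left_diff_distrib sum_subtractf)
    then have "\<forall>v\<in>B. u v - w v = 0"
      using indep[rule_format, of "\<lambda>v. u v - w v"] by simp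
    then show "u = w" using u w by (intro PiE_ext) auto
  qed
  then have "card S = card (B \<rightarrow>\<^sub>E (UNIV :: 'a set))"
    unfolding S_eq by (rule card_image)
  also have "\<dots> = CARD('a) ^ vs.dim S" using card_funcsetE[OF finB] B(4) by simp
  finally show ?thesis .
qed

lemma card_nonzero_additive_onto:
  fixes f :: "'v::ab_group_add \<Rightarrow> 'a::{finite,field}"
  assumes fin: "finite X"
    and add_closed: "\<And>x y. x \<in> X \<Longrightarrow> y \<in> X \<Longrightarrow> x + y \<in> X"
    and diff_closed: "\<And>x y. x \<in> X \<Longrightarrow> y \<in> X \<Longrightarrow> x - y \<in> X"
    and additive: "\<And>x y. f (x + y) = f x + f y"
    and onto: "f ` X = UNIV"
  shows "card {x \<in> X. f x \<noteq> 0} * CARD('a) = (CARD('a) - 1) * card X"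
proof -
  let ?fibre = "\<lambda>t. {x \<in> X. f x = t}"
  have diff: "f (x - y) = f x - f y" for x y
    using additive[of "x - y" y] by (simp add: algebra_simps)
  have card_fibre: "card (?fibre t) = card (?fibre 0)" for t
  proof -
    obtain y where y: "y \<in> X" "f y = t" using onto by (metis UNIV_I image_iff)
    have "bij_betw (\<lambda>x. x + y) (?fibre 0) (?fibre t)"
    proof (rule bij_betwI[where g = "\<lambda>z. z - y"])
      show "(\<lambda>x. x + y) \<in> ?fibre 0 \<rightarrow> ?fibre t" using y by (auto intro: add_closed simp: additive)
      show "(\<lambda>z. z - y) \<in> ?fibre t \<rightarrow> ?fibre 0" using y by (auto intro: diff_closed simp: diff)
    qed auto
    then show ?thesis by (simp add: bij_betw_same_card)
  qed
  have "card X = card (\<Union>t. ?fibre t)"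
    by (rule arg_cong[where f = card]) auto
  also have "\<dots> = (\<Sum>t\<in>UNIV. card (?fibre t))"
    using fin by (intro card_UN_disjoint) auto
  also have "\<dots> = (\<Sum>t\<in>(UNIV::'a set). card (?fibre 0))"
    by (rule sum.cong[OF refl card_fibre])
  finally have "card X = CARD('a) * card (?fibre 0)" by simp
  moreover have "{x \<in> X. f x \<noteq> 0} = X - ?fibre 0" by auto
  then have "card {x \<in> X. f x \<noteq> 0} = card X - card (?fibre 0)"
    using fin by (simp add: card_Diff_subset)
  ultimately show ?thesis by (simp add: algebra_simps diff_mult_distrib)
qed

lemma sum_affine_UNIV: "(\<Sum>t\<in>UNIV. c + t * a) = (\<Sum>t\<in>UNIV. t) * (a :: 'a::{finite,ring_1})"
  by (simp add: sum.distrib sum_distrib_right of_nat_CARD_eq_0)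

lemma sum_quadratic_UNIV:
  "(\<Sum>t\<in>UNIV. (P + t * a) * (Q + t * b))
    = (\<Sum>t\<in>UNIV. t) * (P * b + a * Q) + (\<Sum>t\<in>UNIV. t * t) * (a * (b :: 'a::{finite,comm_ring_1}))"
proof -
  have "(\<Sum>t\<in>UNIV. (P + t * a) * (Q + t * b)) = (\<Sum>t\<in>UNIV. P * Q + t * (P * b + a * Q) + t * t * (a * b))"
    by (rule sum.cong) (auto simp: algebra_simps)
  then show ?thesis
    by (simp add: sum.distrib sum_distrib_right of_nat_CARD_eq_0)
qed

(* Summing out t3 and then t2 leaves a constant in t1, and q \<cdot> c = 0. *)
lemma sum_quadratic_cube:
  fixes L M a1 a2 a3 b1 b2 b3 :: "'a::{finite,comm_ring_1}"
  shows "(\<Sum>t1\<in>UNIV. \<Sum>t2\<in>UNIV. \<Sum>t3\<in>UNIV.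
    (L + t1 * a1 + t2 * a2 + t3 * a3) * (M + t1 * b1 + t2 * b2 + t3 * b3)) = 0"
proof -
  define \<sigma>1 \<sigma>2 where "\<sigma>1 = (\<Sum>t\<in>(UNIV :: 'a set). t)" and "\<sigma>2 = (\<Sum>t\<in>(UNIV :: 'a set). t * t)"
  have "(\<Sum>t3\<in>UNIV. (L + t1 * a1 + t2 * a2 + t3 * a3) * (M + t1 * b1 + t2 * b2 + t3 * b3))
      = (\<sigma>1 * ((L + t1 * a1) * b3 + a3 * (M + t1 * b1)) + \<sigma>2 * (a3 * b3)) + t2 * (\<sigma>1 * (a2 * b3 + a3 * b2))"
    for t1 t2
    using sum_quadratic_UNIV[of "L + t1 * a1 + t2 * a2" a3 "M + t1 * b1 + t2 * b2" b3]
    by (simp add: \<sigma>1_def \<sigma>2_def algebra_simps)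
  then show ?thesis
    by (simp add: sum_affine_UNIV of_nat_CARD_eq_0 \<sigma>1_def)
qed

lemma sum_UNIV_triple:
  "(\<Sum>t\<in>UNIV. f t) = (\<Sum>t1\<in>UNIV. \<Sum>t2\<in>UNIV. \<Sum>t3\<in>UNIV. f (t1, t2, t3))"
proof -
  have "(\<Sum>t\<in>UNIV. f t) = (\<Sum>t\<in>UNIV \<times> UNIV \<times> UNIV. f t)"
    by simp
  also have "\<dots> = (\<Sum>t1\<in>UNIV. \<Sum>t23\<in>UNIV \<times> UNIV. f (t1, t23))"
    by (rule sum.cartesian_product')
  also have "\<dots> = (\<Sum>t1\<in>UNIV. \<Sum>t2\<in>UNIV. \<Sum>t3\<in>UNIV. f (t1, t2, t3))"
    by (rule sum.cong[OF refl], rule sum.cartesian_product')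
  finally show ?thesis .
qed

lemma wtH_eq_0_iff: "wtH (c :: 'i::finite \<Rightarrow> 'a::zero) = 0 \<longleftrightarrow> c = 0"
  by (auto simp: wtH_def fun_eq_iff)

lemma min_dist_eq_Min_weights:
  fixes C :: "('i \<Rightarrow> 'a::ab_group_add) set"
  assumes "0 \<in> C" and diff_closed: "\<And>x y. x \<in> C \<Longrightarrow> y \<in> C \<Longrightarrow> x - y \<in> C"
  shows "min_dist C = Min (weights C)"
proof -
  have distH_eq: "distH x y = wtH (x - y)" for x y :: "'i \<Rightarrow> 'a"
    by (simp add: distH_def wtH_def)
  have "{distH x y | x y. x \<in> C \<and> y \<in> C \<and> x \<noteq> y} = weights C"
  proof (rule antisym)
    show "{distH x y | x y. x \<in> C \<and> y \<in> C \<and> x \<noteq> y} \<subseteq> weights C"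
      by (auto simp: weights_def distH_eq intro: diff_closed)
    show "weights C \<subseteq> {distH x y | x y. x \<in> C \<and> y \<in> C \<and> x \<noteq> y}"
      using \<open>0 \<in> C\<close> by (force simp: weights_def distH_eq)
  qed
  then show ?thesis by (simp add: min_dist_def)
qed

lemma weights_if_freq_pos: "0 < freq C w \<Longrightarrow> w \<in> weights C"
  unfolding freq_def weights_def by (auto simp: card_gt_0_iff)

lemma freq_image:
  fixes f :: "'t \<Rightarrow> ('i \<Rightarrow> 'a::zero)"
  assumes "inj_on f T" and "0 < w"
  shows "freq (f ` T) w = card {t \<in> T. wtH (f t) = w}"
proof -
  have "wtH (0 :: 'i \<Rightarrow> 'a) = 0" by (simp add: wtH_def)
  then have "{c \<in> f ` T. c \<noteq> 0 \<and> wtH c = w} = f ` {t \<in> T. wtH (f t) = w}"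
    using \<open>0 < w\<close> by auto
  moreover have "inj_on f {t \<in> T. wtH (f t) = w}"
    using \<open>inj_on f T\<close> by (rule inj_on_subset) auto
  ultimately show ?thesis by (simp add: freq_def card_image)
qed

lemma sum_freq_weights:
  fixes C :: "('i \<Rightarrow> 'a::zero) set"
  assumes "finite C"
  shows "(\<Sum>w\<in>weights C. freq C w) = card (C - {0})"
proof -
  have "C - {0} = (\<Union>w\<in>weights C. {c \<in> C. c \<noteq> 0 \<and> wtH c = w})"
    by (auto simp: weights_def)
  moreover have "finite (weights C)"
    using assms by (simp add: weights_def)
  ultimately show ?thesis
    unfolding freq_def by (simp only:) (rule card_UN_disjoint[symmetric], use assms in auto)
qed

section \<open>Linear forms on coordinate subspaces\<close>

lemma dotp_add_left: "dotp (u + v) w = dotp u w + dotp v w"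
  unfolding dotp_def by (simp add: algebra_simps sum.distrib)

lemma dotp_add_right: "dotp u (v + w) = dotp u v + dotp u w"
  unfolding dotp_def by (simp add: algebra_simps sum.distrib)

lemma dotp_fscale_left: "dotp (fscale k u) w = k * dotp u w"
  unfolding dotp_def fscale_def by (simp add: algebra_simps sum_distrib_left)

lemma dotp_fun_upd: "dotp v (w(i := x)) = dotp v w + v i * (x - w i)"
proof -
  have "dotp v (w(i := x)) = v i * x + (\<Sum>j\<in>UNIV - {i}. v j * w j)"
    unfolding dotp_def by (subst sum.remove[of _ i]) (auto intro!: sum.cong)
  moreover have "dotp v w = v i * w i + (\<Sum>j\<in>UNIV - {i}. v j * w j)"
    unfolding dotp_def by (subst sum.remove[of _ i]) auto
  ultimately show ?thesis by (simp add: algebra_simps)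
qed

lemma dotp_zero_right [simp]: "dotp v 0 = 0"
  by (simp add: dotp_def)

lemma dotp_single [simp]: "dotp v (0(i := x)) = v i * x"
  by (simp add: dotp_fun_upd)

lemma Delta_iff: "w \<in> Delta P \<longleftrightarrow> (\<forall>i. i \<notin> P \<longrightarrow> w i = 0)"
  by (auto simp: Delta_def supp_def)

lemma Delta_UNIV [simp]: "Delta UNIV = UNIV"
  by (auto simp: Delta_def)

lemma dotp_eq_0_if_Delta:
  assumes "w \<in> Delta P" and "\<forall>i\<in>P. v i = 0"
  shows "dotp v w = 0"
  unfolding dotp_def
proof (rule sum.neutral, rule ballI)
  show "v i * w i = 0" for i
    using assms by (cases "i \<in> P") (auto simp: Delta_iff)
qed

lemma card_Delta: "card (Delta P :: ('n::finite \<Rightarrow> 'a::{finite,zero}) set) = CARD('a) ^ card P"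
proof -
  have "Delta P = (\<Pi>\<^sub>E i\<in>UNIV. if i \<in> P then UNIV else {0::'a})"
    by (auto simp: Delta_iff PiE_def Pi_def split: if_splits)
  then have "card (Delta P :: ('n \<Rightarrow> 'a) set) = (\<Prod>i\<in>UNIV. if i \<in> P then CARD('a) else 1)"
    by (auto simp: card_PiE intro!: prod.cong)
  then show ?thesis by (simp add: prod.If_cases)
qed

lemma card_Delta_minus_0:
  "card (Delta P - {0} :: ('n::finite \<Rightarrow> 'a::{finite,zero}) set) = CARD('a) ^ card P - 1"
  by (simp add: card_Delta Delta_iff)

definition dot3 :: "('n::finite, 'a::comm_ring) Rvec \<Rightarrow> ('n, 'a) Rvec \<Rightarrow> 'a" where
  "dot3 v s = dotp (fst v) (fst s) + dotp (fst (snd v)) (fst (snd s)) + dotp (snd (snd v)) (snd (snd s))"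

definition Delta3 :: "'n set \<Rightarrow> 'n set \<Rightarrow> 'n set \<Rightarrow> ('n, 'a::zero) Rvec set" where
  "Delta3 P1 P2 P3 = Delta P1 \<times> Delta P2 \<times> Delta P3"

definition vanishes_on :: "'n set \<Rightarrow> 'n set \<Rightarrow> 'n set \<Rightarrow> ('n, 'a::zero) Rvec \<Rightarrow> bool" where
  "vanishes_on P1 P2 P3 v \<longleftrightarrow>
    (\<forall>i\<in>P1. fst v i = 0) \<and> (\<forall>i\<in>P2. fst (snd v) i = 0) \<and> (\<forall>i\<in>P3. snd (snd v) i = 0)"

lemma dot3_add_left: "dot3 (v + w) s = dot3 v s + dot3 w s"
  by (simp add: dot3_def dotp_add_left)

lemma dot3_add_right: "dot3 v (s + t) = dot3 v s + dot3 v t"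
  by (simp add: dot3_def dotp_add_right)

lemma Delta3_add_closed:
  "(s :: ('n, 'a::monoid_add) Rvec) \<in> Delta3 P1 P2 P3 \<Longrightarrow> t \<in> Delta3 P1 P2 P3 \<Longrightarrow> s + t \<in> Delta3 P1 P2 P3"
  by (auto simp: Delta3_def Delta_iff)

lemma Delta3_diff_closed:
  "(s :: ('n, 'a::group_add) Rvec) \<in> Delta3 P1 P2 P3 \<Longrightarrow> t \<in> Delta3 P1 P2 P3 \<Longrightarrow> s - t \<in> Delta3 P1 P2 P3"
  by (auto simp: Delta3_def Delta_iff)

lemma card_Delta3: "card (Delta3 P1 P2 P3 :: ('n::finite, 'a::{finite,zero}) Rvec set)
  = CARD('a) ^ card P1 * CARD('a) ^ card P2 * CARD('a) ^ card P3"
  by (simp add: Delta3_def card_cartesian_product card_Delta)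

lemma dot3_eq_0_if_vanishes_on: "vanishes_on P1 P2 P3 v \<Longrightarrow> s \<in> Delta3 P1 P2 P3 \<Longrightarrow> dot3 v s = 0"
  using dotp_eq_0_if_Delta[of "fst s" P1 "fst v"] dotp_eq_0_if_Delta[of "fst (snd s)" P2 "fst (snd v)"]
    dotp_eq_0_if_Delta[of "snd (snd s)" P3 "snd (snd v)"]
  by (auto simp: dot3_def Delta3_def vanishes_on_def)

lemma vanishes_on_Delta3_eq_0: "vanishes_on P1 P2 P3 v \<Longrightarrow> v \<in> Delta3 P1 P2 P3 \<Longrightarrow> v = 0"
  by (cases v) (auto simp: vanishes_on_def Delta3_def Delta_iff zero_prod_def fun_eq_iff)

lemma dot3_Delta3_onto:
  fixes v :: "('n::finite, 'a::field) Rvec"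
  assumes "\<not> vanishes_on P1 P2 P3 v"
  shows "dot3 v ` Delta3 P1 P2 P3 = UNIV"
proof -
  have "\<delta> \<in> dot3 v ` Delta3 P1 P2 P3" for \<delta>
  proof -
    consider i where "i \<in> P1" "fst v i \<noteq> 0" | i where "i \<in> P2" "fst (snd v) i \<noteq> 0"
      | i where "i \<in> P3" "snd (snd v) i \<noteq> 0"
      using assms unfolding vanishes_on_def by blast
    then show ?thesis
    proof cases
      case 1
      then show ?thesis
        by (intro image_eqI[where x = "(0(i := \<delta> / fst v i), 0, 0)"]) (auto simp: dot3_def Delta3_def Delta_iff)
    next
      case 2
      then show ?thesis
        by (intro image_eqI[where x = "(0, 0(i := \<delta> / fst (snd v) i), 0)"]) (auto simp: dot3_def Delta3_def Delta_iff)
    next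
      case 3
      then show ?thesis
        by (intro image_eqI[where x = "(0, 0, 0(i := \<delta> / snd (snd v) i))"]) (auto simp: dot3_def Delta3_def Delta_iff)
    qed
  qed
  then show ?thesis by blast
qed

lemma card_nonzero_dot3_Delta3:
  fixes v :: "('n::finite, 'a::{finite,field}) Rvec"
  assumes "\<not> vanishes_on P1 P2 P3 v"
  shows "card {s \<in> Delta3 P1 P2 P3. dot3 v s \<noteq> 0} * CARD('a)
    = (CARD('a) - 1) * card (Delta3 P1 P2 P3 :: ('n, 'a) Rvec set)"
  by (rule card_nonzero_additive_onto)
    (auto intro: Delta3_add_closed Delta3_diff_closed simp: dot3_add_right dot3_Delta3_onto[OF assms])

lemma sum_dot3_mult_Delta3:
  fixes u v :: "('n::finite, 'a::{finite,comm_ring_1}) Rvec"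
  assumes "i \<in> P1" and "j \<in> P2" and "k \<in> P3"
  shows "(\<Sum>s\<in>Delta3 P1 P2 P3. dot3 u s * dot3 v s) = 0"
proof -
  define e :: "'a \<times> 'a \<times> 'a \<Rightarrow> ('n, 'a) Rvec"
    where "e t = (0(i := fst t), 0(j := fst (snd t)), 0(k := snd (snd t)))" for t
  define coord where "coord s = (fst s i, fst (snd s) j, snd (snd s) k)" for s :: "('n, 'a) Rvec"
  define X0 where "X0 = {s \<in> Delta3 P1 P2 P3. coord s = 0}"
  have e_mem: "e t \<in> Delta3 P1 P2 P3" for t
    using assms by (simp add: e_def Delta3_def Delta_iff)
  have bij: "bij_betw (\<lambda>(t, s0). s0 + e t) (UNIV \<times> X0) (Delta3 P1 P2 P3)"
  proof (rule bij_betwI[where g = "\<lambda>s. (coord s, s - e (coord s))"])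
    show "(\<lambda>(t, s0). s0 + e t) \<in> UNIV \<times> X0 \<rightarrow> Delta3 P1 P2 P3"
      using e_mem by (auto simp: X0_def intro: Delta3_add_closed)
    show "(\<lambda>s. (coord s, s - e (coord s))) \<in> Delta3 P1 P2 P3 \<rightarrow> UNIV \<times> X0"
      using e_mem by (auto simp: X0_def coord_def e_def zero_prod_def intro: Delta3_diff_closed)
  qed (auto simp: X0_def coord_def e_def zero_prod_def)
  have dot3_shift: "dot3 w (s0 + e t) = dot3 w s0 + fst t * fst w i + fst (snd t) * fst (snd w) j
      + snd (snd t) * snd (snd w) k" for w s0 t
    by (simp add: e_def dot3_def dotp_add_right algebra_simps)
  have "(\<Sum>s\<in>Delta3 P1 P2 P3. dot3 u s * dot3 v s)
      = (\<Sum>(t, s0)\<in>UNIV \<times> X0. dot3 u (s0 + e t) * dot3 v (s0 + e t))"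
    using sum.reindex_bij_betw[OF bij, of "\<lambda>s. dot3 u s * dot3 v s"] by (simp add: split_def)
  also have "\<dots> = (\<Sum>t\<in>UNIV. \<Sum>s0\<in>X0. dot3 u (s0 + e t) * dot3 v (s0 + e t))"
    by (rule sum.cartesian_product[symmetric])
  also have "\<dots> = (\<Sum>s0\<in>X0. \<Sum>t\<in>UNIV. dot3 u (s0 + e t) * dot3 v (s0 + e t))"
    by (rule sum.swap)
  also have "\<dots> = 0"
    by (simp add: sum_UNIV_triple dot3_shift sum_quadratic_cube)
  finally show ?thesis .
qed

lemma S1_eq_Delta3_diff: "S1 A B C = Delta3 A B UNIV - Delta3 A B C"
  by (auto simp: S1_def Delta3_def DeltaC_def)

lemma card_S1: "card (S1 A B C :: ('n::finite, 'a::{finite,comm_ring}) Rvec set)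
  = CARD('a) ^ card A * CARD('a) ^ card B * (CARD('a) ^ CARD('n) - CARD('a) ^ card C)"
proof -
  have "Delta3 A B C \<subseteq> (Delta3 A B UNIV :: ('n, 'a) Rvec set)"
    by (auto simp: Delta3_def)
  then show ?thesis
    by (simp add: S1_eq_Delta3_diff card_Diff_subset card_Delta3 diff_mult_distrib2)
qed

lemma sum_dot3_mult_S1:
  fixes u v :: "('n::finite, 'a::{finite,comm_ring_1}) Rvec"
  assumes "A \<noteq> {}" and "B \<noteq> {}" and "C \<noteq> {}"
  shows "(\<Sum>s\<in>S1 A B C. dot3 u s * dot3 v s) = 0"
proof -
  obtain i j k where ijk: "i \<in> A" "j \<in> B" "k \<in> C"
    using assms by blast
  have "Delta3 A B C \<subseteq> (Delta3 A B UNIV :: ('n, 'a) Rvec set)"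
    by (auto simp: Delta3_def)
  then show ?thesis
    by (simp add: S1_eq_Delta3_diff sum_diff sum_dot3_mult_Delta3[OF ijk]
      sum_dot3_mult_Delta3[OF ijk(1,2) UNIV_I])
qed

section \<open>Gray images of the codes\<close>

(* Coordinate (s, b) of the Gray image of the codeword of r = (\<alpha>, \<beta>, \<gamma>) is dot3 (gray_form b r) s:
   the u-part \<beta>\<cdot>w1 + \<alpha>\<cdot>w2 + \<gamma>\<cdot>w3 of \<langle>r, s\<rangle> for b = False, plus the constant part \<alpha>\<cdot>w1
   for b = True. *)
definition gray_form :: "bool \<Rightarrow> ('n, 'a::plus) Rvec \<Rightarrow> ('n, 'a) Rvec" where
  "gray_form b r = (if b then fst r + fst (snd r) else fst (snd r), fst r, snd (snd r))"

definition gray_cw ::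
    "('n::finite, 'a::comm_ring) Rvec set \<Rightarrow> ('n, 'a) Rvec \<Rightarrow> ('n, 'a) Rvec \<times> bool \<Rightarrow> 'a" where
  "gray_cw D r = gray D (\<lambda>s. if s \<in> D then rinner r s else (0, 0))"

lemma Phi_codeR_eq_range: "Phi D (codeR D) = range (gray_cw D)"
  unfolding Phi_def codeR_def gray_cw_def by auto

lemma gray_cw_apply: "gray_cw D r (s, b) = (if s \<in> D then dot3 (gray_form b r) s else 0)"
  by (cases r; cases s)
    (auto simp: gray_cw_def gray_def rinner_def gray_form_def dot3_def dotp_add_left algebra_simps)

lemma gray_form_add:
  "gray_form b (r + r') = gray_form b r + gray_form b (r' :: ('n, 'a::ab_semigroup_add) Rvec)"
  by (simp add: gray_form_def algebra_simps)

lemma gray_cw_add: "gray_cw D (r + r') = gray_cw D r + gray_cw D r'"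
proof (rule ext)
  fix p :: "_ \<times> bool"
  show "gray_cw D (r + r') p = (gray_cw D r + gray_cw D r') p"
    by (cases p) (simp add: gray_cw_apply gray_form_add dot3_add_left)
qed

lemma gray_cw_diff: "gray_cw D (r - r') = gray_cw D r - gray_cw D r'"
  using gray_cw_add[of D "r - r'" r'] by (simp add: algebra_simps)

lemma gray_cw_zero: "gray_cw D 0 = 0"
  using gray_cw_diff[of D 0 0] by simp

lemma gray_cw_fscale:
  "gray_cw D (fscale k \<alpha>, fscale k \<beta>, fscale k \<gamma>) = fscale k (gray_cw D (\<alpha>, \<beta>, \<gamma>))"
proof (rule ext)
  fix p :: "_ \<times> bool"
  have "fscale k \<alpha> + fscale k \<beta> = fscale k (\<alpha> + \<beta>)"
    by (simp add: fscale_def fun_eq_iff algebra_simps)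
  then have "dot3 (gray_form b (fscale k \<alpha>, fscale k \<beta>, fscale k \<gamma>)) s = k * dot3 (gray_form b (\<alpha>, \<beta>, \<gamma>)) s"
    for b s
    by (simp add: gray_form_def dot3_def dotp_fscale_left algebra_simps)
  then show "gray_cw D (fscale k \<alpha>, fscale k \<beta>, fscale k \<gamma>) p = fscale k (gray_cw D (\<alpha>, \<beta>, \<gamma>)) p"
    by (cases p) (simp add: gray_cw_apply fscale_def)
qed

lemma linear_code_gray_cw:
  fixes D :: "('n::finite, 'a::{finite,field}) Rvec set"
  shows "is_linear_code (D \<times> UNIV) (range (gray_cw D))"
  unfolding is_linear_code_def
proof (intro conjI)
  show "finite (D \<times> (UNIV :: bool set))" by simp
  show "range (gray_cw D) \<subseteq> ambient (D \<times> UNIV)"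
    by (auto simp: ambient_def gray_cw_apply)
  interpret vs: vector_space "fscale :: 'a \<Rightarrow> (('n, 'a) Rvec \<times> bool \<Rightarrow> 'a) \<Rightarrow> _"
    by (rule vector_space_fscale)
  show "vs.subspace (range (gray_cw D))"
    unfolding vs.subspace_def
  proof (intro conjI ballI allI)
    show "0 \<in> range (gray_cw D)"
      by (metis gray_cw_zero rangeI)
    show "x + y \<in> range (gray_cw D)" if "x \<in> range (gray_cw D)" "y \<in> range (gray_cw D)" for x y
      using that by (auto simp: gray_cw_add[symmetric])
    show "fscale k x \<in> range (gray_cw D)" if "x \<in> range (gray_cw D)" for k x
      using that by (auto simp: gray_cw_fscale[symmetric] split: prod.splits)
  qed
qed

lemma wtH_gray_cw:
  fixes D :: "('n::finite, 'a::{finite,comm_ring}) Rvec set"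
  shows "wtH (gray_cw D r)
    = card {s \<in> D. dot3 (gray_form False r) s \<noteq> 0} + card {s \<in> D. dot3 (gray_form True r) s \<noteq> 0}"
proof -
  let ?E = "\<lambda>b. {s \<in> D. dot3 (gray_form b r) s \<noteq> 0}"
  have "{p. gray_cw D r p \<noteq> 0} = (\<lambda>s. (s, False)) ` ?E False \<union> (\<lambda>s. (s, True)) ` ?E True"
  proof (rule set_eqI)
    fix p :: "_ \<times> bool"
    show "p \<in> {p. gray_cw D r p \<noteq> 0} \<longleftrightarrow> p \<in> (\<lambda>s. (s, False)) ` ?E False \<union> (\<lambda>s. (s, True)) ` ?E True"
      by (cases p; cases "snd p") (auto simp: gray_cw_apply)
  qed
  moreover have "card ((\<lambda>s. (s, False)) ` ?E False \<union> (\<lambda>s. (s, True)) ` ?E True)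
      = card (?E False) + card (?E True)"
    by (subst card_Un_disjoint) (auto simp: card_image inj_on_def)
  ultimately show ?thesis by (simp add: wtH_def)
qed

lemma self_orthogonal_gray_cw_S1:
  assumes "A \<noteq> {}" and "B \<noteq> {}" and "C \<noteq> {}"
  shows "self_orthogonal (S1 A B C \<times> UNIV)
    (range (gray_cw (S1 A B C) :: ('n::finite, 'a::{finite,field}) Rvec \<Rightarrow> _))"
  unfolding self_orthogonal_def dual_code_def
proof (intro subsetI CollectI conjI ballI)
  fix x y :: "('n, 'a) Rvec \<times> bool \<Rightarrow> 'a"
  assume "x \<in> range (gray_cw (S1 A B C))" "y \<in> range (gray_cw (S1 A B C))"
  then obtain r r' :: "('n, 'a) Rvec" where x: "x = gray_cw (S1 A B C) r" and y: "y = gray_cw (S1 A B C) r'"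
    by blast
  show "y \<in> ambient (S1 A B C \<times> UNIV)"
    by (auto simp: ambient_def y gray_cw_apply)
  have "(\<Sum>p\<in>S1 A B C \<times> UNIV. x p * y p) = (\<Sum>s\<in>S1 A B C. \<Sum>b\<in>UNIV. x (s, b) * y (s, b))"
    by (rule sum.cartesian_product')
  also have "\<dots> = (\<Sum>s\<in>S1 A B C. \<Sum>b\<in>UNIV. dot3 (gray_form b r) s * dot3 (gray_form b r') s)"
    by (simp add: x y gray_cw_apply)
  also have "\<dots> = (\<Sum>b\<in>UNIV. \<Sum>s\<in>S1 A B C. dot3 (gray_form b r) s * dot3 (gray_form b r') s)"
    by (rule sum.swap)
  also have "\<dots> = 0"
    by (simp add: sum_dot3_mult_S1[OF assms])
  finally show "(\<Sum>p\<in>S1 A B C \<times> UNIV. x p * y p) = 0" .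
qed

section \<open>Weights and frequencies for S1\<close>

context
  fixes A B C :: "'n::finite set"
  assumes C_proper: "card C < CARD('n)" and A_not_sub_B: "\<not> A \<subseteq> B"
begin

(* The nonzero weights of one Gray half of a codeword. *)
definition wt1 :: "nat \<Rightarrow> nat" where
  "wt1 q = (q - 1) * q ^ (card A + card B - 1) * (q ^ CARD('n) - q ^ card C)"

definition wt2 :: "nat \<Rightarrow> nat" where
  "wt2 q = (q - 1) * q ^ (CARD('n) + card A + card B - 1)"

lemma card_A_pos: "0 < card A"
  using A_not_sub_B by (auto simp: card_gt_0_iff)

lemma card_A_minus_B: "card (A - B) = card (A \<union> B) - card B"
proof -
  have "card (A - B) = card ((A \<union> B) - B)"
    by (rule arg_cong[where f = card]) blast
  also have "\<dots> = card (A \<union> B) - card B"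
    by (rule card_Diff_subset) auto
  finally show ?thesis .
qed

lemma card_Compl_C: "card (- C) = CARD('n) - card C"
  by (simp add: Compl_eq_Diff_UNIV card_Diff_subset)

lemma wt1_mult: "wt1 q * q = (q - 1) * (q ^ card A * q ^ card B * (q ^ CARD('n) - q ^ card C))"
proof -
  obtain k where k: "card A + card B = Suc k"
    using card_A_pos by (metis add_gr_0 gr0_conv_Suc)
  then have "q ^ card A * q ^ card B = q ^ k * q"
    by (simp add: power_add[symmetric])
  moreover have "card A + card B - 1 = k"
    using k by simp
  ultimately show ?thesis
    unfolding wt1_def by (simp only: ac_simps)
qed

lemma wt2_mult: "wt2 q * q = (q - 1) * (q ^ card A * q ^ card B * q ^ CARD('n))"
proof -
  obtain k where k: "card A + card B = Suc k"
    using card_A_pos by (metis add_gr_0 gr0_conv_Suc)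
  then have "q ^ card A * q ^ card B * q ^ CARD('n) = q ^ (CARD('n) + k) * q"
    by (simp add: power_add[symmetric] algebra_simps)
  moreover have "CARD('n) + card A + card B - 1 = CARD('n) + k"
    using k by simp
  ultimately show ?thesis
    by (simp add: wt2_def algebra_simps)
qed

lemma wt_bounds: "0 < wt1 CARD('a::{finite,field})" "wt1 CARD('a) < wt2 CARD('a)"
proof -
  let ?q = "CARD('a)"
  have q: "2 \<le> ?q" by (rule CARD_field_ge_2)
  then show "0 < wt1 ?q"
    using C_proper by (simp add: wt1_def power_strict_increasing)
  have "wt1 ?q * ?q < wt2 ?q * ?q"
    using q by (simp add: wt1_mult wt2_mult)
  then show "wt1 ?q < wt2 ?q" by simp
qed

lemma wt1_add_wt2:
  assumes "0 < q"
  shows "wt1 q + wt2 q = (q - 1) * q ^ (card A + card B - 1) * (2 * q ^ CARD('n) - q ^ card C)"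
proof -
  have "q ^ card C \<le> q ^ CARD('n)"
    using assms C_proper by (simp add: power_increasing)
  then have "2 * q ^ CARD('n) - q ^ card C = (q ^ CARD('n) - q ^ card C) + q ^ CARD('n)"
    by simp
  moreover have "CARD('n) + card A + card B - 1 = (card A + card B - 1) + CARD('n)"
    using card_A_pos by simp
  then have "wt2 q = (q - 1) * q ^ (card A + card B - 1) * q ^ CARD('n)"
    unfolding wt2_def by (simp only: power_add mult.assoc)
  ultimately show ?thesis
    unfolding wt1_def by (simp only: add_mult_distrib2)
qed

lemma card_nonzero_dot3_S1:
  fixes v :: "('n, 'a::{finite,field}) Rvec"
  shows "card {s \<in> S1 A B C. dot3 v s \<noteq> 0} =
    (if \<not> vanishes_on A B C v then wt1 CARD('a) else if snd (snd v) \<noteq> 0 then wt2 CARD('a) else 0)"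
proof -
  let ?Z = "\<lambda>X. {s \<in> X. dot3 v s \<noteq> 0}" and ?q = "CARD('a)"
  have "{s \<in> S1 A B C. dot3 v s \<noteq> 0} = ?Z (Delta3 A B UNIV) - ?Z (Delta3 A B C)"
    by (auto simp: S1_eq_Delta3_diff)
  moreover have "?Z (Delta3 A B C) \<subseteq> ?Z (Delta3 A B UNIV)"
    by (auto simp: Delta3_def)
  ultimately have card_eq:
      "card {s \<in> S1 A B C. dot3 v s \<noteq> 0} = card (?Z (Delta3 A B UNIV)) - card (?Z (Delta3 A B C))"
    by (simp add: card_Diff_subset)
  have q_pos: "0 < ?q" using CARD_field_ge_2 [where 'a = 'a] by simp
  consider (generic) "\<not> vanishes_on A B C v"
    | (gamma) "vanishes_on A B C v" "snd (snd v) \<noteq> 0"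
    | (zero) "vanishes_on A B C v" "snd (snd v) = 0"
    by blast
  then show ?thesis
  proof cases
    case generic
    then have "\<not> vanishes_on A B UNIV v" by (auto simp: vanishes_on_def)
    with generic have "card (?Z (Delta3 A B UNIV)) * ?q - card (?Z (Delta3 A B C)) * ?q = wt1 ?q * ?q"
      by (simp add: card_nonzero_dot3_Delta3 card_Delta3 wt1_mult diff_mult_distrib2)
    then have "(card (?Z (Delta3 A B UNIV)) - card (?Z (Delta3 A B C))) * ?q = wt1 ?q * ?q"
      by (simp add: diff_mult_distrib)
    then show ?thesis
      using generic q_pos by (simp add: card_eq)
  next
    case gamma
    then have "\<not> vanishes_on A B UNIV v" by (auto simp: vanishes_on_def fun_eq_iff)
    then have "card (?Z (Delta3 A B UNIV)) * ?q = wt2 ?q * ?q"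
      by (simp add: card_nonzero_dot3_Delta3 card_Delta3 wt2_mult)
    moreover have Z_empty: "?Z (Delta3 A B C) = {}"
      using dot3_eq_0_if_vanishes_on[OF gamma(1)] by auto
    ultimately show ?thesis
      using gamma q_pos unfolding card_eq Z_empty by simp
  next
    case zero
    then have "vanishes_on A B UNIV v" by (auto simp: vanishes_on_def)
    then have Z_empty: "?Z (Delta3 A B UNIV) = {}"
      using dot3_eq_0_if_vanishes_on by blast
    show ?thesis
      using zero unfolding card_eq Z_empty by simp
  qed
qed

lemma wtH_gray_cw_S1:
  fixes r :: "('n, 'a::{finite,field}) Rvec"
  defines "g \<equiv> if snd (snd r) = 0 then 0 else wt2 CARD('a)"
  shows "wtH (gray_cw (S1 A B C) r) =
    (if vanishes_on A B C (gray_form False r) then g else wt1 CARD('a))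
    + (if vanishes_on A B C (gray_form True r) then g else wt1 CARD('a))"
  by (simp add: wtH_gray_cw card_nonzero_dot3_S1 g_def gray_form_def)

lemma gray_cw_S1_eq_0_iff:
  fixes r :: "('n, 'a::{finite,field}) Rvec"
  shows "gray_cw (S1 A B C) r = 0 \<longleftrightarrow> vanishes_on (A \<union> B) A UNIV r"
proof -
  have "gray_cw (S1 A B C) r = 0 \<longleftrightarrow> vanishes_on A B C (gray_form False r)
      \<and> vanishes_on A B C (gray_form True r) \<and> snd (snd r) = 0"
    using wt_bounds[where 'a = 'a] by (simp add: wtH_eq_0_iff[symmetric] wtH_gray_cw_S1)
  also have "\<dots> \<longleftrightarrow> vanishes_on (A \<union> B) A UNIV r"
    by (cases r) (auto simp: vanishes_on_def gray_form_def fun_eq_iff)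
  finally show ?thesis .
qed

lemma range_gray_cw_S1:
  "range (gray_cw (S1 A B C))
    = gray_cw (S1 A B C) ` (Delta3 (A \<union> B) A UNIV :: ('n, 'a::{finite,field}) Rvec set)"
proof (rule antisym)
  show "range (gray_cw (S1 A B C)) \<subseteq> gray_cw (S1 A B C) ` (Delta3 (A \<union> B) A UNIV :: ('n, 'a) Rvec set)"
  proof
    fix c assume "c \<in> range (gray_cw (S1 A B C) :: ('n, 'a) Rvec \<Rightarrow> _)"
    then obtain \<alpha> \<beta> \<gamma> :: "'n \<Rightarrow> 'a" where c: "c = gray_cw (S1 A B C) (\<alpha>, \<beta>, \<gamma>)" by auto
    define t where "t = (\<lambda>i. if i \<in> A \<union> B then \<alpha> i else 0, \<lambda>i. if i \<in> A then \<beta> i else 0, \<gamma>)"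
    have "gray_cw (S1 A B C) ((\<alpha>, \<beta>, \<gamma>) - t) = 0"
      by (simp add: gray_cw_S1_eq_0_iff vanishes_on_def t_def)
    then have "c = gray_cw (S1 A B C) t"
      by (simp add: c gray_cw_diff)
    moreover have "t \<in> Delta3 (A \<union> B) A UNIV"
      by (simp add: Delta3_def Delta_iff t_def)
    ultimately show "c \<in> gray_cw (S1 A B C) ` Delta3 (A \<union> B) A UNIV" by blast
  qed
qed auto

lemma inj_on_gray_cw_S1:
  "inj_on (gray_cw (S1 A B C)) (Delta3 (A \<union> B) A UNIV :: ('n, 'a::{finite,field}) Rvec set)"
proof (rule inj_onI)
  fix t t' :: "('n, 'a) Rvec"
  assume "t \<in> Delta3 (A \<union> B) A UNIV" "t' \<in> Delta3 (A \<union> B) A UNIV"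
    and "gray_cw (S1 A B C) t = gray_cw (S1 A B C) t'"
  then have "vanishes_on (A \<union> B) A UNIV (t - t')" "t - t' \<in> Delta3 (A \<union> B) A UNIV"
    by (simp_all add: gray_cw_S1_eq_0_iff[symmetric] gray_cw_diff Delta3_diff_closed)
  then show "t = t'"
    using vanishes_on_Delta3_eq_0 by fastforce
qed

lemma freq_range_gray_cw_S1:
  assumes "0 < w"
  shows "freq (range (gray_cw (S1 A B C) :: ('n, 'a::{finite,field}) Rvec \<Rightarrow> _)) w
    = card {t \<in> Delta3 (A \<union> B) A UNIV :: ('n, 'a) Rvec set. wtH (gray_cw (S1 A B C) t) = w}"
  using freq_image[OF inj_on_gray_cw_S1 assms] by (simp add: range_gray_cw_S1)

abbreviation half_vanishes :: "bool \<Rightarrow> ('n, 'a::{finite,field}) Rvec \<Rightarrow> bool" where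
  "half_vanishes b t \<equiv> vanishes_on A B C (gray_form b t)"

lemma both_halves_vanish:
  "{t \<in> Delta3 (A \<union> B) A UNIV :: ('n, 'a::{finite,field}) Rvec set.
      half_vanishes False t \<and> half_vanishes True t \<and> snd (snd t) \<in> G}
    = (\<lambda>\<gamma>. (0, 0, \<gamma>)) ` (Delta (- C) \<inter> G)"
proof (rule antisym; rule subsetI)
  fix t :: "('n, 'a) Rvec"
  obtain \<alpha> \<beta> \<gamma> where t: "t = (\<alpha>, \<beta>, \<gamma>)" by (cases t)
  assume "t \<in> {t \<in> Delta3 (A \<union> B) A UNIV. half_vanishes False t \<and> half_vanishes True t \<and> snd (snd t) \<in> G}"
  then have "\<alpha> = 0" "\<beta> = 0" "\<gamma> \<in> Delta (- C) \<inter> G"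
    by (auto simp: t Delta3_def vanishes_on_def gray_form_def Delta_iff fun_eq_iff) blast
  then show "t \<in> (\<lambda>\<gamma>. (0, 0, \<gamma>)) ` (Delta (- C) \<inter> G)"
    by (simp add: t)
qed (auto simp: Delta3_def vanishes_on_def gray_form_def Delta_iff)

lemma one_half_vanishes:
  "{t \<in> Delta3 (A \<union> B) A UNIV :: ('n, 'a::{finite,field}) Rvec set.
      half_vanishes False t \<noteq> half_vanishes True t \<and> snd (snd t) \<in> G}
    = (\<lambda>(\<alpha>, b, \<gamma>). (\<alpha>, if b then - \<alpha> else 0, \<gamma>)) ` ((Delta (A - B) - {0}) \<times> UNIV \<times> (Delta (- C) \<inter> G))"
    (is "?L = ?f ` ?S")
proof (rule antisym; rule subsetI)
  fix t :: "('n, 'a) Rvec"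
  obtain \<alpha> \<beta> \<gamma> where t: "t = (\<alpha>, \<beta>, \<gamma>)" by (cases t)
  assume "t \<in> ?L"
  then have t_mem: "(\<alpha>, \<beta>, \<gamma>) \<in> Delta3 (A \<union> B) A UNIV" and \<gamma>: "\<gamma> \<in> Delta (- C) \<inter> G"
    and one: "half_vanishes False (\<alpha>, \<beta>, \<gamma>) \<noteq> half_vanishes True (\<alpha>, \<beta>, \<gamma>)"
    and \<alpha>: "\<alpha> \<in> Delta (A - B)"
    by (auto simp: t Delta3_def vanishes_on_def gray_form_def Delta_iff)
  show "t \<in> ?f ` ?S"
  proof (cases "half_vanishes False (\<alpha>, \<beta>, \<gamma>)")
    case True
    with t_mem have "\<beta> = 0" by (auto simp: Delta3_def vanishes_on_def gray_form_def Delta_iff fun_eq_iff)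
    moreover from True one \<alpha> \<gamma> have "\<alpha> \<noteq> 0"
      by (auto simp: vanishes_on_def gray_form_def Delta_iff)
    ultimately show ?thesis
      using \<alpha> \<gamma> by (intro image_eqI[where x = "(\<alpha>, False, \<gamma>)"]) (auto simp: t)
  next
    case False
    with one have "\<forall>i\<in>A. \<alpha> i + \<beta> i = 0"
      by (simp add: vanishes_on_def gray_form_def)
    with t_mem \<alpha> have "\<beta> = - \<alpha>"
      by (auto simp: Delta3_def Delta_iff fun_eq_iff eq_neg_iff_add_eq_0 add.commute)
    moreover from False \<open>\<beta> = - \<alpha>\<close> \<alpha> \<gamma> have "\<alpha> \<noteq> 0"
      by (auto simp: vanishes_on_def gray_form_def Delta_iff)
    ultimately show ?thesis
      using \<alpha> \<gamma> by (intro image_eqI[where x = "(\<alpha>, True, \<gamma>)"]) (auto simp: t)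
  qed
next
  fix t :: "('n, 'a) Rvec"
  assume "t \<in> ?f ` ?S"
  then obtain \<alpha> b \<gamma> where t: "t = ?f (\<alpha>, b, \<gamma>)"
    and "\<alpha> \<in> Delta (A - B)" "\<alpha> \<noteq> 0" "\<gamma> \<in> Delta (- C) \<inter> G"
    by auto
  moreover from \<open>\<alpha> \<noteq> 0\<close> \<open>\<alpha> \<in> Delta (A - B)\<close> obtain i where "i \<in> A" "i \<notin> B" "\<alpha> i \<noteq> 0"
    by (auto simp: Delta_iff fun_eq_iff)
  ultimately show "t \<in> ?L"
    by (auto simp: Delta3_def vanishes_on_def gray_form_def Delta_iff)
qed

lemma card_both_halves_vanish:
  "card {t \<in> Delta3 (A \<union> B) A UNIV :: ('n, 'a) Rvec set.
      half_vanishes False t \<and> half_vanishes True t \<and> snd (snd t) \<in> G}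
    = card (Delta (- C) \<inter> G :: ('n \<Rightarrow> 'a::{finite,field}) set)"
  unfolding both_halves_vanish by (rule card_image) (simp add: inj_on_def)

lemma card_one_half_vanishes:
  "card {t \<in> Delta3 (A \<union> B) A UNIV :: ('n, 'a) Rvec set.
      half_vanishes False t \<noteq> half_vanishes True t \<and> snd (snd t) \<in> G}
    = 2 * (CARD('a) ^ card (A - B) - 1) * card (Delta (- C) \<inter> G :: ('n \<Rightarrow> 'a::{finite,field}) set)"
proof -
  have "inj_on (\<lambda>(\<alpha>, b, \<gamma>). (\<alpha>, if b then - \<alpha> else 0, \<gamma>))
      ((Delta (A - B) - {0}) \<times> UNIV \<times> (Delta (- C) \<inter> G) :: (('n \<Rightarrow> 'a) \<times> bool \<times> ('n \<Rightarrow> 'a)) set)"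
    by (auto simp: inj_on_def split: if_splits)
  then show ?thesis
    unfolding one_half_vanishes
    by (simp add: card_image card_cartesian_product card_Delta_minus_0)
qed

lemma weight_classes:
  fixes t :: "('n, 'a::{finite,field}) Rvec"
  defines "w \<equiv> wtH (gray_cw (S1 A B C) t)" and "q \<equiv> CARD('a)"
  shows "w = wt1 q \<longleftrightarrow> half_vanishes False t \<noteq> half_vanishes True t \<and> snd (snd t) \<in> {0}"
    and "w = wt1 q + wt2 q \<longleftrightarrow> half_vanishes False t \<noteq> half_vanishes True t \<and> snd (snd t) \<in> - {0}"
    and "w = 2 * wt2 q \<longleftrightarrow> half_vanishes False t \<and> half_vanishes True t \<and> snd (snd t) \<in> - {0}"
    and "w = 2 * wt1 q \<longleftrightarrow> \<not> half_vanishes False t \<and> \<not> half_vanishes True t"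
    and "w \<in> {0, wt1 q, 2 * wt1 q, wt1 q + wt2 q, 2 * wt2 q}"
  using wt_bounds[where 'a = 'a] unfolding w_def q_def wtH_gray_cw_S1 by auto

context
  fixes code :: "(('n, 'a::{finite,field}) Rvec \<times> bool \<Rightarrow> 'a) set" and q :: nat
  defines "code \<equiv> range (gray_cw (S1 A B C))" and "q \<equiv> CARD('a)"
begin

lemma zero_mem_code: "0 \<in> code"
  unfolding code_def by (metis gray_cw_zero rangeI)

lemma card_code: "card code = q ^ (CARD('n) + card A + card (A \<union> B))"
  unfolding code_def q_def range_gray_cw_S1 card_image[OF inj_on_gray_cw_S1]
  by (simp add: card_Delta3 power_add)

lemma code_dim_code: "code_dim code = CARD('n) + card A + card (A \<union> B)"
proof -
  have "module.subspace fscale code"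
    using linear_code_gray_cw[of "S1 A B C :: ('n, 'a) Rvec set"] by (simp add: code_def is_linear_code_def)
  then have "card code = q ^ code_dim code"
    unfolding code_dim_def q_def by (rule card_subspace_fscale) simp
  then have "q ^ code_dim code = q ^ (CARD('n) + card A + card (A \<union> B))"
    by (simp add: card_code)
  then show ?thesis
    using CARD_field_ge_2[where 'a = 'a] by (simp add: q_def power_inject_exp)
qed

lemma freq_wt1: "int (freq code (wt1 q)) = 2 * (int q ^ (card (A \<union> B) - card B) - 1)"
proof -
  have "freq code (wt1 q) = card {t \<in> Delta3 (A \<union> B) A UNIV :: ('n, 'a) Rvec set.
      half_vanishes False t \<noteq> half_vanishes True t \<and> snd (snd t) \<in> {0}}"
    unfolding code_def q_def freq_range_gray_cw_S1[OF wt_bounds(1)] weight_classes(1) ..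
  also have "\<dots> = 2 * (q ^ card (A - B) - 1)"
    unfolding card_one_half_vanishes q_def by (simp add: Delta_iff)
  finally show ?thesis
    using one_le_power[of q "card (A - B)"] CARD_field_ge_2[where 'a = 'a]
    by (simp add: card_A_minus_B q_def of_nat_diff)
qed

lemma freq_wt1_wt2: "int (freq code (wt1 q + wt2 q))
    = 2 * (int q ^ (card (A \<union> B) - card B) - 1) * (int q ^ (CARD('n) - card C) - 1)"
proof -
  have pos: "0 < wt1 CARD('a) + wt2 CARD('a)"
    using wt_bounds(1)[where 'a = 'a] by simp
  have "freq code (wt1 q + wt2 q) = card {t \<in> Delta3 (A \<union> B) A UNIV :: ('n, 'a) Rvec set.
      half_vanishes False t \<noteq> half_vanishes True t \<and> snd (snd t) \<in> - {0}}"
    unfolding code_def q_def freq_range_gray_cw_S1[OF pos] weight_classes(2) ..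
  also have "\<dots> = 2 * (q ^ card (A - B) - 1) * (q ^ (CARD('n) - card C) - 1)"
    unfolding card_one_half_vanishes q_def
    by (simp add: Diff_eq[symmetric] card_Delta_minus_0 card_Compl_C)
  finally show ?thesis
    using one_le_power[of q "card (A - B)"] one_le_power[of q "CARD('n) - card C"]
      CARD_field_ge_2[where 'a = 'a]
    by (simp add: card_A_minus_B q_def of_nat_diff)
qed

lemma freq_2wt2: "int (freq code (2 * wt2 q)) = int q ^ (CARD('n) - card C) - 1"
proof -
  have pos: "0 < 2 * wt2 CARD('a)"
    using wt_bounds[where 'a = 'a] by simp
  have "freq code (2 * wt2 q) = card {t \<in> Delta3 (A \<union> B) A UNIV :: ('n, 'a) Rvec set.
      half_vanishes False t \<and> half_vanishes True t \<and> snd (snd t) \<in> - {0}}"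
    unfolding code_def q_def freq_range_gray_cw_S1[OF pos] weight_classes(3) ..
  also have "\<dots> = q ^ (CARD('n) - card C) - 1"
    unfolding card_both_halves_vanish q_def
    by (simp add: Diff_eq[symmetric] card_Delta_minus_0 card_Compl_C)
  finally show ?thesis
    using one_le_power[of q "CARD('n) - card C"] CARD_field_ge_2[where 'a = 'a]
    by (simp add: q_def of_nat_diff)
qed

lemma weights_code: "weights code = {wt1 q, 2 * wt1 q, wt1 q + wt2 q, 2 * wt2 q}"
proof (rule antisym)
  show "weights code \<subseteq> {wt1 q, 2 * wt1 q, wt1 q + wt2 q, 2 * wt2 q}"
  proof
    fix w assume "w \<in> weights code"
    then obtain t :: "('n, 'a) Rvec" where "gray_cw (S1 A B C) t \<noteq> 0" "w = wtH (gray_cw (S1 A B C) t)"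
      by (auto simp: weights_def code_def)
    then show "w \<in> {wt1 q, 2 * wt1 q, wt1 q + wt2 q, 2 * wt2 q}"
      using weight_classes(5)[of t] by (auto simp: q_def wtH_eq_0_iff)
  qed
  have "1 < int q ^ (card (A \<union> B) - card B)" "1 < int q ^ (CARD('n) - card C)"
    using CARD_field_ge_2[where 'a = 'a] C_proper A_not_sub_B card_A_pos
    by (auto simp: q_def card_A_minus_B[symmetric] card_gt_0_iff intro!: one_less_power)
  then have "0 < int (freq code (wt1 q))" "0 < int (freq code (wt1 q + wt2 q))"
    "0 < int (freq code (2 * wt2 q))"
    unfolding freq_wt1 freq_wt1_wt2 freq_2wt2 by simp_all
  then have "0 < freq code (wt1 q)" "0 < freq code (wt1 q + wt2 q)" "0 < freq code (2 * wt2 q)"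
    by simp_all
  moreover have "2 * wt1 q \<in> weights code"
  proof -
    obtain i where "i \<in> A" using card_A_pos by (auto simp: card_gt_0_iff)
    let ?t = "(0, 0(i := 1), 0) :: ('n, 'a) Rvec"
    have "wtH (gray_cw (S1 A B C) ?t) = 2 * wt1 q"
      using \<open>i \<in> A\<close> by (simp add: weight_classes(4) q_def vanishes_on_def gray_form_def)
    moreover have "0 < 2 * wt1 q"
      using wt_bounds(1)[where 'a = 'a] by (simp add: q_def)
    ultimately have "gray_cw (S1 A B C) ?t \<in> code" "gray_cw (S1 A B C) ?t \<noteq> 0"
      "wtH (gray_cw (S1 A B C) ?t) = 2 * wt1 q"
      by (auto simp: code_def simp flip: wtH_eq_0_iff)
    then show ?thesis
      unfolding weights_def by (intro CollectI exI[where x = "gray_cw (S1 A B C) ?t"]) simp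
  qed
  ultimately show "{wt1 q, 2 * wt1 q, wt1 q + wt2 q, 2 * wt2 q} \<subseteq> weights code"
    by (auto intro: weights_if_freq_pos)
qed

lemma card_weight_values: "card {wt1 q, 2 * wt1 q, wt1 q + wt2 q, 2 * wt2 q} = 4"
  using wt_bounds[where 'a = 'a] by (simp add: q_def)

lemma min_dist_code: "min_dist code = wt1 q"
proof -
  have "x - y \<in> code" if xy: "x \<in> code" "y \<in> code" for x y
  proof -
    obtain r r' where "x = gray_cw (S1 A B C) r" "y = gray_cw (S1 A B C) r'"
      using xy unfolding code_def by blast
    then have "x - y = gray_cw (S1 A B C) (r - r')"
      by (simp add: gray_cw_diff)
    then show ?thesis
      unfolding code_def by (rule image_eqI) simp
  qed
  then have "min_dist code = Min {wt1 q, 2 * wt1 q, wt1 q + wt2 q, 2 * wt2 q}"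
    by (simp add: min_dist_eq_Min_weights zero_mem_code weights_code)
  also have "\<dots> = wt1 q"
    using wt_bounds[where 'a = 'a] by (simp add: q_def)
  finally show ?thesis .
qed

lemma freq_2wt1: "int (freq code (2 * wt1 q)) = int q ^ (CARD('n) + card A + card (A \<union> B))
    - 2 * int q ^ (CARD('n) - card C + card (A \<union> B) - card B) + int q ^ (CARD('n) - card C)"
proof -
  define x y where "x = int q ^ (card (A \<union> B) - card B)" and "y = int q ^ (CARD('n) - card C)"
  have "(\<Sum>w\<in>weights code. freq code w) = q ^ (CARD('n) + card A + card (A \<union> B)) - 1"
    by (simp add: sum_freq_weights zero_mem_code card_code)
  moreover have "(\<Sum>w\<in>weights code. freq code w) = freq code (wt1 q) + freq code (2 * wt1 q)
      + freq code (wt1 q + wt2 q) + freq code (2 * wt2 q)"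
    using wt_bounds[where 'a = 'a] by (simp add: weights_code q_def)
  moreover have "1 \<le> q ^ (CARD('n) + card A + card (A \<union> B))"
    using CARD_field_ge_2[where 'a = 'a] by (simp add: q_def)
  ultimately have "int (freq code (wt1 q) + freq code (2 * wt1 q)
      + freq code (wt1 q + wt2 q) + freq code (2 * wt2 q))
      = int (q ^ (CARD('n) + card A + card (A \<union> B)) - 1)"
    by simp
  then have total: "int (freq code (wt1 q)) + int (freq code (2 * wt1 q))
      + int (freq code (wt1 q + wt2 q)) + int (freq code (2 * wt2 q))
      = int q ^ (CARD('n) + card A + card (A \<union> B)) - 1"
    using \<open>1 \<le> q ^ (CARD('n) + card A + card (A \<union> B))\<close> by (simp add: of_nat_diff)
  have "CARD('n) - card C + card (A \<union> B) - card B = (card (A \<union> B) - card B) + (CARD('n) - card C)"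
    using card_mono[of "A \<union> B" B] by simp
  then have "int q ^ (CARD('n) - card C + card (A \<union> B) - card B) = x * y"
    by (simp add: x_def y_def power_add)
  moreover have "int (freq code (wt1 q + wt2 q)) = 2 * (x * y) - 2 * x - 2 * y + 2"
    unfolding freq_wt1_wt2 x_def y_def by (simp add: algebra_simps)
  ultimately show ?thesis
    using total freq_wt1 freq_2wt2 unfolding x_def[symmetric] y_def[symmetric]
    by (simp add: algebra_simps)
qed

end

end

theorem mainTheorem5:
  fixes A B C :: "'n::finite set"
  defines "m \<equiv> card (UNIV :: 'n set)"
      and "q \<equiv> card (UNIV :: 'a::{finite, field} set)"
      and "D \<equiv> (S1 A B C :: ('n, 'a) Rvec set)"
      and "a \<equiv> card A" and "b \<equiv> card B" and "c \<equiv> card C" and "ab \<equiv> card (A \<union> B)"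
  assumes "m \<ge> 2"
      and "A \<noteq> {}" and "B \<noteq> {}" and "C \<noteq> {}"
      and "card C < m"
      and "\<not> A \<subseteq> B"
  shows "is_linear_code (D \<times> (UNIV :: bool set)) (Phi D (codeR D))
    \<and> code_length (D \<times> (UNIV :: bool set)) (Phi D (codeR D)) = 2 * q ^ (a + b) * (q ^ m - q ^ c)
    \<and> code_dim (Phi D (codeR D)) = m + a + ab
    \<and> min_dist (Phi D (codeR D)) = (q - 1) * q ^ (a + b - 1) * (q ^ m - q ^ c)
    \<and> weights (Phi D (codeR D)) =
        {(q - 1) * q ^ (a + b - 1) * (q ^ m - q ^ c),
         2 * (q - 1) * q ^ (a + b - 1) * (q ^ m - q ^ c),
         (q - 1) * q ^ (a + b - 1) * (2 * q ^ m - q ^ c),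
         2 * (q - 1) * q ^ (m + a + b - 1)}
    \<and> card (weights (Phi D (codeR D))) = 4
    \<and> int (freq (Phi D (codeR D)) ((q - 1) * q ^ (a + b - 1) * (q ^ m - q ^ c)))
        = 2 * (int q ^ (ab - b) - 1)
    \<and> int (freq (Phi D (codeR D)) (2 * (q - 1) * q ^ (a + b - 1) * (q ^ m - q ^ c)))
        = int q ^ (m + a + ab) - 2 * int q ^ (m - c + ab - b) + int q ^ (m - c)
    \<and> int (freq (Phi D (codeR D)) ((q - 1) * q ^ (a + b - 1) * (2 * q ^ m - q ^ c)))
        = 2 * (int q ^ (ab - b) - 1) * (int q ^ (m - c) - 1)
    \<and> int (freq (Phi D (codeR D)) (2 * (q - 1) * q ^ (m + a + b - 1)))
        = int q ^ (m - c) - 1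
    \<and> ((q = 2 \<or> q = 3) \<longrightarrow> self_orthogonal (D \<times> (UNIV :: bool set)) (Phi D (codeR D)))"
proof -
  have hyps: "card C < CARD('n)" "\<not> A \<subseteq> B"
    using assms by (simp_all add: m_def)
  have weight_values:
    "(q - 1) * q ^ (a + b - 1) * (q ^ m - q ^ c) = wt1 A B C q"
    "2 * (q - 1) * q ^ (a + b - 1) * (q ^ m - q ^ c) = 2 * wt1 A B C q"
    "(q - 1) * q ^ (a + b - 1) * (2 * q ^ m - q ^ c) = wt1 A B C q + wt2 A B q"
    "2 * (q - 1) * q ^ (m + a + b - 1) = 2 * wt2 A B q"
    using wt1_add_wt2[OF hyps, of q]
    by (simp_all add: wt1_def[OF hyps] wt2_def[OF hyps] m_def q_def a_def b_def c_def)
  (* self_orthogonal_gray_cw_S1 holds over every finite field. *)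
  show ?thesis
    unfolding weight_values Phi_codeR_eq_range code_length_def
    unfolding D_def q_def m_def a_def b_def c_def ab_def
    by (simp add: linear_code_gray_cw card_S1 card_cartesian_product power_add
      code_dim_code[OF hyps] min_dist_code[OF hyps] weights_code[OF hyps] card_weight_values[OF hyps]
      freq_wt1[OF hyps] freq_2wt1[OF hyps] freq_wt1_wt2[OF hyps] freq_2wt2[OF hyps]
      self_orthogonal_gray_cw_S1[OF assms(9-11)])
qed

end
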